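(* Let $p,q$ be positive integers, let $e\in\mathbb{R}^p$ be the vector of all ones, and let $$L:=\{(x,u)\in\mathbb{R}^p\times\mathbb{R}^q : x\ge \|u\|e\}$$ (componentwise order). Let $x,y\in\mathbb{R}^p$ and $u,v\in\mathbb{R}^q\setminus\{0\}$. Then $((x,u),(y,v))\in C(L)$ if and only if there exists $\lambda>0$ such that $v=-\lambda u$, $\langle y,e\rangle=\|v\|$, and $(x-\|u\|e,\,y)\in C(\mathbb{R}^p_+)$, i.e. $x-\|u\|e\ge 0$, $y\ge 0$ and $\langle x-\|u\|e,y\rangle=0$.
   Context: For a proper cone $K\subset\mathbb{R}^\ell$, its dual cone is $K^*:=\{x\in\mathbb{R}^\ell:\langle x,y\rangle\ge0\ \forall y\in K\}$, and its complementarity set is $C(K):=\{(x,y)\in K\times K^*: \langle x,y\rangle=0\}$. Elements of $\mathbb{R}^p\times\mathbb{R}^q$ are identified with vectors of $\mathbb{R}^{p+q}$, with inner product $\langle (x,u),(y,v)\rangle=\langle x,y\rangle+\langle u,v\rangle$. The inequality $\ge$ between vectors is componentwise; $\mathbb{R}^p_+=\{x\in\mathbb{R}^p:x\ge0\}$ (which is self-dual). The cone $L$ is a proper cone, and its dual is $L^*=M:=\{(y,v)\in\mathbb{R}^p\times\mathbb{R}^q:\langle y,e\rangle\ge\|v\|,\ y\ge0\}$. *)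

theory Defs
  imports "HOL-Analysis.Analysis"
begin

definition dual_cone :: "'a::real_inner set \<Rightarrow> 'a set" where
  "dual_cone K = {x. \<forall>y\<in>K. inner x y \<ge> 0}"

definition compl_set :: "'a::real_inner set \<Rightarrow> ('a \<times> 'a) set" where
  "compl_set K = {(x, y). x \<in> K \<and> y \<in> dual_cone K \<and> inner x y = 0}"

definition ones :: "real^'p" where
  "ones = (\<chi> i. 1)"

definition nonneg_orthant :: "(real^'p) set" where
  "nonneg_orthant = {x. x \<ge> 0}"

definition coneL :: "((real^'p) \<times> (real^'q)) set" where
  "coneL = {(x, u). x \<ge> norm u *\<^sub>R ones}"

end

theory Submission
  imports Defs
begin

text \<open>The dual of L is M = {(y,v). y \<ge> 0, <y,e> \<ge> |v|}. For (x,u) \<in> L and (y,v) \<in> M,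
  <(x,u),(y,v)> = <x - |u| e, y> + |u| (<y,e> - |v|) + (<u,v> + |u| |v|)
  is a sum of three nonnegative terms (the last by Cauchy-Schwarz), so complementarity
  means that all three vanish; for u \<noteq> 0 the middle one gives <y,e> = |v|, and
  equality in Cauchy-Schwarz gives v = -\<lambda> u with \<lambda> > 0.\<close>

lemma inner_nonneg_vec:
  fixes a b :: "real^'n"
  assumes "a \<ge> 0" "b \<ge> 0"
  shows "inner a b \<ge> 0"
  using assms unfolding inner_vec_def less_eq_vec_def
  by (auto intro!: sum_nonneg)

lemma inner_mono_vec:
  fixes a b y :: "real^'n"
  assumes "a \<le> b" "y \<ge> 0"
  shows "inner y a \<le> inner y b"
proof -
  have "inner y (b - a) \<ge> 0"
    using assms by (intro inner_nonneg_vec) (auto simp: less_eq_vec_def)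
  then show ?thesis by (simp add: inner_diff_right)
qed

lemma nonneg_axis: "axis i (1::real) \<ge> 0"
  by (simp add: less_eq_vec_def axis_def)

lemma dual_cone_nonneg_orthant: "dual_cone nonneg_orthant = (nonneg_orthant :: (real^'n) set)"
proof (intro set_eqI iffI)
  fix y :: "real^'n"
  assume "y \<in> dual_cone nonneg_orthant"
  then have "inner y (axis i 1) \<ge> 0" for i
    using nonneg_axis by (auto simp: dual_cone_def nonneg_orthant_def)
  then show "y \<in> nonneg_orthant"
    by (simp add: nonneg_orthant_def less_eq_vec_def inner_axis)
qed (auto simp: dual_cone_def nonneg_orthant_def inner_nonneg_vec)

lemma compl_set_nonneg_orthant_iff:
  "(z, y) \<in> compl_set (nonneg_orthant :: (real^'n) set) \<longleftrightarrow> z \<ge> 0 \<and> y \<ge> 0 \<and> inner z y = 0"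
  unfolding compl_set_def dual_cone_nonneg_orthant by (auto simp: nonneg_orthant_def)

lemma dual_cone_coneL:
  "dual_cone (coneL :: ((real^'p) \<times> (real^'q)) set) =
     {(y, v). y \<ge> 0 \<and> norm v \<le> inner y ones}"
proof (intro set_eqI iffI; clarify)
  fix y :: "real^'p" and v :: "real^'q"
  assume dual: "(y, v) \<in> dual_cone coneL"
  have "inner y (axis i 1) \<ge> 0" for i
  proof -
    have "(axis i 1, 0) \<in> coneL"
      using nonneg_axis[of i] by (simp add: coneL_def)
    then show ?thesis
      using dual unfolding dual_cone_def by fastforce
  qed
  then have y0: "y \<ge> 0"
    by (simp add: less_eq_vec_def inner_axis)
  moreover have "norm v \<le> inner y ones"
  proof (cases "v = 0")
    case False
    let ?w = "- (1 / norm v) *\<^sub>R v"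
    have "(ones, ?w) \<in> coneL"
      using False by (simp add: coneL_def)
    then have "inner y ones + inner v ?w \<ge> 0"
      using dual by (force simp: dual_cone_def)
    moreover have "inner v ?w = - norm v"
      using False by (simp add: power2_norm_eq_inner[symmetric] power2_eq_square)
    ultimately show ?thesis by simp
  qed (use y0 in \<open>simp add: inner_nonneg_vec ones_def less_eq_vec_def\<close>)
  ultimately show "y \<ge> 0 \<and> norm v \<le> inner y ones" ..
next
  fix y :: "real^'p" and v :: "real^'q"
  assume y0: "y \<ge> 0" and yv: "norm v \<le> inner y ones"
  show "(y, v) \<in> dual_cone coneL"
    unfolding dual_cone_def
  proof clarify
    fix a :: "real^'p" and w :: "real^'q"
    assume "(a, w) \<in> coneL"
    then have "norm w *\<^sub>R ones \<le> a"
      by (simp add: coneL_def)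
    then have "inner y (norm w *\<^sub>R ones) \<le> inner y a"
      using y0 by (rule inner_mono_vec)
    then have "norm w * inner y ones \<le> inner y a"
      by simp
    moreover have "norm w * norm v \<le> norm w * inner y ones"
      using yv by (simp add: mult_left_mono)
    moreover have "- (norm v * norm w) \<le> inner v w"
      using norm_cauchy_schwarz[of "-v" w] by simp
    ultimately show "0 \<le> inner (y, v) (a, w)"
      by (simp add: algebra_simps)
  qed
qed

lemma inner_eq_neg_norm_mult_iff:
  fixes u v :: "'a::real_inner"
  assumes "u \<noteq> 0" "v \<noteq> 0"
  shows "inner u v = - (norm u * norm v) \<longleftrightarrow> (\<exists>lam>0. v = - (lam *\<^sub>R u))"
proof
  assume "inner u v = - (norm u * norm v)"
  then have "norm u *\<^sub>R v = - (norm v *\<^sub>R u)"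
    using norm_cauchy_schwarz_eq[of "-u" v] by simp
  then have "(1 / norm u) *\<^sub>R (norm u *\<^sub>R v) = - ((norm v / norm u) *\<^sub>R u)"
    by simp
  then have "v = - ((norm v / norm u) *\<^sub>R u)"
    using assms(1) by simp
  then show "\<exists>lam>0. v = - (lam *\<^sub>R u)"
    using assms by (intro exI[of _ "norm v / norm u"]) simp
next
  assume "\<exists>lam>0. v = - (lam *\<^sub>R u)"
  then obtain lam where "lam > 0" "v = - (lam *\<^sub>R u)" by blast
  then show "inner u v = - (norm u * norm v)"
    by (simp add: power2_norm_eq_inner[symmetric] power2_eq_square)
qed

lemma inner_prod_ones_split:
  fixes x y :: "real^'p" and u v :: "'a::real_inner"
  shows "inner (x, u) (y, v) =
    inner (x - norm u *\<^sub>R ones) y + norm u * (inner y ones - norm v) + (inner u v + norm u * norm v)"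
  by (simp add: inner_diff_left inner_commute[of ones y] algebra_simps)

theorem proposition1:
  fixes x y :: "real^'p" and u v :: "real^'q"
  assumes "u \<noteq> 0" and "v \<noteq> 0"
  shows "(((x, u), (y, v)) \<in> compl_set (coneL :: ((real^'p) \<times> (real^'q)) set)) \<longleftrightarrow>
    (\<exists>lam::real. lam > 0 \<and> v = - (lam *\<^sub>R u) \<and> inner y ones = norm v \<and>
       (x - norm u *\<^sub>R ones, y) \<in> compl_set (nonneg_orthant :: (real^'p) set))"
proof -
  let ?z = "x - norm u *\<^sub>R ones"
  have "((x, u), (y, v)) \<in> compl_set coneL \<longleftrightarrow>
      norm u *\<^sub>R ones \<le> x \<and> y \<ge> 0 \<and> norm v \<le> inner y ones \<and>
      inner ?z y + norm u * (inner y ones - norm v) + (inner u v + norm u * norm v) = 0"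
    unfolding compl_set_def dual_cone_coneL inner_prod_ones_split[symmetric]
    by (simp add: coneL_def)
  also have "\<dots> \<longleftrightarrow> norm u *\<^sub>R ones \<le> x \<and> y \<ge> 0 \<and> inner y ones = norm v \<and> inner ?z y = 0 \<and>
      inner u v = - (norm u * norm v)"
  proof -
    have "norm u > 0"
      using assms(1) by simp
    then have "norm u * (inner y ones - norm v) = 0 \<longleftrightarrow> inner y ones = norm v"
      and "norm v \<le> inner y ones \<Longrightarrow> 0 \<le> norm u * (inner y ones - norm v)"
      by simp_all
    moreover have "- (norm u * norm v) \<le> inner u v"
      using norm_cauchy_schwarz[of "-u" v] by simp
    ultimately show ?thesis
      using inner_nonneg_vec[of ?z y] by (smt (verit) diff_ge_0_iff_ge)
  qed
  finally show ?thesis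
    using assms by (auto simp: compl_set_nonneg_orthant_iff inner_eq_neg_norm_mult_iff)
qed

end
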